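(* Let $d,H\in\mathbb{N}$, $d\geq2$, $0<s\leq\frac{1}{4}$, $N\geq(2\sqrt{d}/s)^3H^{\frac{1}{d-1}}$, let \[X_{1},X_{2},\ldots,X_{H}\subseteq \mathbb{R}^{d-1}\times [\tfrac{1}{2}+s,H+\tfrac{1}{2}-s]\] be pairwise disjoint, and suppose that $X:=\bigcup_{m=1}^{H}X_{m}$ is $s$-separated. Then there exists a $2^{8}N^{2}H^{2}$-bilipschitz mapping $\Psi\colon \mathbb{R}^{d}\to\mathbb{R}^{d}$ such that (i) $\Psi(x)=x$ for all $x\in\mathbb{R}^{d-1}\times(\mathbb{R}\setminus (\frac{1}{2},H+\frac{1}{2}))$; (ii) $\Psi(X_{m})\subseteq (\frac{1}{N}\mathbb{Z}^{d-1}\setminus \mathbb{Z}^{d-1})\times\{m\}$ for $m=1,2,\ldots,H$; (iii) $\|\pi(\Psi(x))-\pi(x)\|\leq s^{2}$ for all $x\in X$, where $\pi\colon\mathbb{R}^d\to\mathbb{R}^{d-1}$ is the projection onto the first $d-1$ coordinates.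
   Context: $\|\cdot\|$ is the Euclidean norm. A set is $s$-separated if distinct points are at Euclidean distance at least $s$. A mapping is $L$-bilipschitz if it is injective and both it and its inverse are $L$-Lipschitz. $N$ need not be an integer a priori; $\frac1N\mathbb{Z}^{d-1}=\{z/N: z\in\mathbb{Z}^{d-1}\}$. *)

theory Defs
  imports "HOL-Analysis.Analysis"
begin

text \<open>R^d is modelled as (real^'n) \<times> real with d - 1 = CARD('n); the product norm
  is Euclidean: norm (a,b) = sqrt (norm a ^ 2 + b ^ 2).\<close>

definition bilipschitz :: "real \<Rightarrow> ('a::metric_space \<Rightarrow> 'b::metric_space) \<Rightarrow> bool" where
  "bilipschitz L f \<longleftrightarrow> inj f \<and> L-lipschitz_on UNIV f \<and> L-lipschitz_on (range f) (inv f)"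

definition s_separated :: "real \<Rightarrow> 'a::metric_space set \<Rightarrow> bool" where
  "s_separated s A \<longleftrightarrow> (\<forall>x\<in>A. \<forall>y\<in>A. x \<noteq> y \<longrightarrow> dist x y \<ge> s)"

definition scaled_lattice :: "real \<Rightarrow> (real^'n) set" where
  "scaled_lattice N = {z. \<forall>i. \<exists>k::int. z $ i = real_of_int k / N}"

definition int_lattice :: "(real^'n) set" where
  "int_lattice = {z. \<forall>i. z $ i \<in> \<int>}"

end

theory Submission
  imports Defs
begin

text \<open>
  Each point p of X first receives its own target y p in (1/N)Z^(d-1) - Z^(d-1) within distance s^2
  of its horizontal position.  Cut R^(d-1) into cubes of side s^2/(d-1): points of X over one cube are
  horizontally closer than s^2, so their heights differ by at least s/2 and there are at most
  2H/s + 1 of them, while the cube contains at least (s^2 N/(d-1) - 2)^(d-1) lattice points off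
  Z^(d-1); the lower bound on N makes the second number the larger one.

  Psi is then a composition of two shears built from tents with disjoint supports.  The horizontal
  one adds (y p - pi p, 0), damped by a tent of radius s/2 around p; this perturbation of the
  identity is 2s-Lipschitz with 2s <= 1/2.  The vertical one moves heights along the fibre over each
  target c = y p by a piecewise-linear homeomorphism of (1/2, H + 1/2) sending the height of p to its
  level m, damped by tents of radius 1/(2N) around the 1/N-separated targets; its vertical slopes lie
  in [1/(2H), H/s] and its horizontal Lipschitz constant is 2NH.
\<close>

section \<open>Bilipschitz bounds\<close>

definition bilipschitz_bounds :: "real \<Rightarrow> real \<Rightarrow> ('a::metric_space \<Rightarrow> 'b::metric_space) \<Rightarrow> bool" where
  "bilipschitz_bounds a b f \<longleftrightarrow> 0 \<le> a \<and> 0 \<le> b \<and>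
     (\<forall>x y. dist x y \<le> a * dist (f x) (f y) \<and> dist (f x) (f y) \<le> b * dist x y)"

lemma bilipschitz_boundsI:
  assumes "0 \<le> a" "0 \<le> b"
    and "\<And>x y. dist x y \<le> a * dist (f x) (f y)" "\<And>x y. dist (f x) (f y) \<le> b * dist x y"
  shows "bilipschitz_bounds a b f"
  using assms unfolding bilipschitz_bounds_def by blast

lemma bilipschitz_bounds_mono:
  assumes "bilipschitz_bounds a b f" "a \<le> a'" "b \<le> b'"
  shows "bilipschitz_bounds a' b' f"
proof (rule bilipschitz_boundsI)
  fix x y
  show "dist x y \<le> a' * dist (f x) (f y)"
    using assms unfolding bilipschitz_bounds_def by (meson mult_right_mono order_trans zero_le_dist)
  show "dist (f x) (f y) \<le> b' * dist x y"
    using assms unfolding bilipschitz_bounds_def by (meson mult_right_mono order_trans zero_le_dist)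
qed (use assms in \<open>auto simp: bilipschitz_bounds_def\<close>)

lemma bilipschitz_bounds_comp:
  assumes f: "bilipschitz_bounds a b f" and g: "bilipschitz_bounds a' b' g"
  shows "bilipschitz_bounds (a * a') (b' * b) (g \<circ> f)"
proof (rule bilipschitz_boundsI)
  fix x y
  have "dist x y \<le> a * dist (f x) (f y)" using f unfolding bilipschitz_bounds_def by blast
  also have "\<dots> \<le> a * (a' * dist (g (f x)) (g (f y)))"
    using f g unfolding bilipschitz_bounds_def by (blast intro: mult_left_mono)
  finally show "dist x y \<le> a * a' * dist ((g \<circ> f) x) ((g \<circ> f) y)" by (simp add: mult.assoc)
  have "dist (g (f x)) (g (f y)) \<le> b' * dist (f x) (f y)" using g unfolding bilipschitz_bounds_def by blast
  also have "\<dots> \<le> b' * (b * dist x y)"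
    using f g unfolding bilipschitz_bounds_def by (blast intro: mult_left_mono)
  finally show "dist ((g \<circ> f) x) ((g \<circ> f) y) \<le> b' * b * dist x y" by (simp add: mult.assoc)
qed (use f g in \<open>auto simp: bilipschitz_bounds_def\<close>)

lemma bilipschitz_if_bilipschitz_bounds:
  assumes "bilipschitz_bounds a b f" "a \<le> L" "b \<le> L"
  shows "bilipschitz L f"
proof -
  have bd: "bilipschitz_bounds L L f" using bilipschitz_bounds_mono[OF assms] .
  have inj: "inj f"
  proof (rule injI)
    fix x y assume "f x = f y"
    then show "x = y" using bd unfolding bilipschitz_bounds_def
      by (metis dist_eq_0_iff mult_zero_right order_antisym zero_le_dist)
  qed
  show ?thesis unfolding bilipschitz_def
  proof (intro conjI inj lipschitz_onI)
    fix x y show "dist (f x) (f y) \<le> L * dist x y" using bd unfolding bilipschitz_bounds_def by blast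
  next
    fix x y assume "x \<in> range f" "y \<in> range f"
    then show "dist (inv f x) (inv f y) \<le> L * dist x y"
      using bd inv_f_f[OF inj] unfolding bilipschitz_bounds_def by auto
  qed (use bd in \<open>auto simp: bilipschitz_bounds_def\<close>)
qed

lemma bilipschitz_bounds_add_contraction:
  fixes g :: "'a::real_normed_vector \<Rightarrow> 'a"
  assumes "k-lipschitz_on UNIV g" "k < 1"
  shows "bilipschitz_bounds (1 / (1 - k)) (1 + k) (\<lambda>z. z + g z)"
proof (rule bilipschitz_boundsI)
  fix x y
  have g: "dist (g x) (g y) \<le> k * dist x y" using assms(1) by (auto dest: lipschitz_onD)
  have "dist x y \<le> dist (x + g x) (y + g y) + dist (g x) (g y)"
    using norm_triangle_ineq4[of "(x + g x) - (y + g y)" "g x - g y"]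
    by (simp add: dist_norm algebra_simps)
  then have "(1 - k) * dist x y \<le> dist (x + g x) (y + g y)" using g by (simp add: algebra_simps)
  then show "dist x y \<le> 1 / (1 - k) * dist (x + g x) (y + g y)"
    using assms(2) by (simp add: field_simps)
  have "dist (x + g x) (y + g y) \<le> dist x y + dist (g x) (g y)"
    using norm_triangle_ineq[of "x - y" "g x - g y"] by (simp add: dist_norm algebra_simps)
  then show "dist (x + g x) (y + g y) \<le> (1 + k) * dist x y" using g by (simp add: algebra_simps)
qed (use assms lipschitz_on_nonneg[OF assms(1)] in auto)

lemma dist_Pair_le_add: "dist (a, x) (b, y) \<le> dist a b + dist x y"
  unfolding dist_Pair_Pair by (rule sqrt_sum_squares_le_sum) auto

lemma abs_diff_bounds_if_slopes_between:
  fixes f :: "real \<Rightarrow> real"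
  assumes "\<And>t1 t2. t1 \<le> t2 \<Longrightarrow> a * (t2 - t1) \<le> f t2 - f t1 \<and> f t2 - f t1 \<le> b * (t2 - t1)" "0 \<le> a"
  shows "a * \<bar>t1 - t2\<bar> \<le> \<bar>f t1 - f t2\<bar> \<and> \<bar>f t1 - f t2\<bar> \<le> b * \<bar>t1 - t2\<bar>"
proof (cases "t1 \<le> t2")
  case True
  then show ?thesis using assms(1)[OF True] mult_nonneg_nonneg[OF assms(2), of "t2 - t1"]
    by (simp add: abs_minus_commute abs_of_nonneg)
next
  case False
  then show ?thesis using assms(1)[of t2 t1] mult_nonneg_nonneg[OF assms(2), of "t1 - t2"]
    by (simp add: abs_of_nonneg)
qed

lemma bilipschitz_bounds_shear:
  fixes F :: "'a::metric_space \<Rightarrow> real \<Rightarrow> real"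
  assumes slopes: "\<And>z t1 t2. t1 \<le> t2 \<Longrightarrow>
                    a * (t2 - t1) \<le> F z t2 - F z t1 \<and> F z t2 - F z t1 \<le> b * (t2 - t1)"
    and lip: "\<And>z1 z2 t. \<bar>F z1 t - F z2 t\<bar> \<le> K * dist z1 z2"
    and a: "0 < a" and b: "0 \<le> b" and K: "0 \<le> K"
  shows "bilipschitz_bounds (1 + K / a + 1 / a) (1 + K + b) (\<lambda>(z, t). (z, F z t))"
proof (rule bilipschitz_boundsI)
  fix p q :: "'a \<times> real"
  obtain z1 t1 z2 t2 where pq: "p = (z1, t1)" "q = (z2, t2)" by (cases p, cases q)
  let ?D = "dist (z1, F z1 t1) (z2, F z2 t2)"
  have F_abs: "a * \<bar>t1 - t2\<bar> \<le> \<bar>F z1 t1 - F z1 t2\<bar>" "\<bar>F z1 t1 - F z1 t2\<bar> \<le> b * \<bar>t1 - t2\<bar>"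
    using abs_diff_bounds_if_slopes_between[of a "F z1" b] slopes a by auto
  have dz: "dist z1 z2 \<le> dist p q" "dist z1 z2 \<le> ?D"
    using dist_fst_le[of p q] dist_fst_le[of "(z1, F z1 t1)" "(z2, F z2 t2)"] pq by auto
  have dt: "\<bar>t1 - t2\<bar> \<le> dist p q" "\<bar>F z1 t1 - F z2 t2\<bar> \<le> ?D"
    using dist_snd_le[of p q] dist_snd_le[of "(z1, F z1 t1)" "(z2, F z2 t2)"] pq
    by (auto simp: dist_real_def)
  have "\<bar>F z1 t1 - F z2 t2\<bar> \<le> b * \<bar>t1 - t2\<bar> + K * dist z1 z2"
    using F_abs lip[of z1 t2 z2] by linarith
  then have "?D \<le> dist z1 z2 + b * \<bar>t1 - t2\<bar> + K * dist z1 z2"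
    using dist_Pair_le_add[of z1 "F z1 t1" z2 "F z2 t2"] by (simp add: dist_real_def)
  also have "\<dots> \<le> dist p q + b * dist p q + K * dist p q"
    using dz dt K b by (intro add_mono mult_left_mono) auto
  finally show "dist ((\<lambda>(z, t). (z, F z t)) p) ((\<lambda>(z, t). (z, F z t)) q) \<le> (1 + K + b) * dist p q"
    using pq by (simp add: algebra_simps)
  have "a * \<bar>t1 - t2\<bar> \<le> \<bar>F z1 t1 - F z2 t2\<bar> + K * dist z1 z2"
    using F_abs lip[of z1 t2 z2] by linarith
  then have "\<bar>t1 - t2\<bar> \<le> 1 / a * \<bar>F z1 t1 - F z2 t2\<bar> + K / a * dist z1 z2"
    using a by (simp add: field_simps)
  then have "dist p q \<le> dist z1 z2 + 1 / a * \<bar>F z1 t1 - F z2 t2\<bar> + K / a * dist z1 z2"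
    using dist_Pair_le_add[of z1 t1 z2 t2] pq by (simp add: dist_real_def)
  also have "\<dots> \<le> ?D + 1 / a * ?D + K / a * ?D"
    using dz dt K a by (intro add_mono mult_left_mono) auto
  finally show "dist p q \<le> (1 + K / a + 1 / a) * dist ((\<lambda>(z, t). (z, F z t)) p) ((\<lambda>(z, t). (z, F z t)) q)"
    using pq by (simp add: algebra_simps)
qed (use a b K in auto)

section \<open>Lipschitz bumps around separated points\<close>

text \<open>For a \<open>2 r\<close>-separated set \<open>C\<close> the tents \<open>max 0 (1 - dist z c / r)\<close> around the points
  \<open>c \<in> C\<close> have disjoint supports, and \<open>bump C r u\<close> is their sum weighted by the values \<open>u c\<close>.\<close>

definition bump :: "'a::metric_space set \<Rightarrow> real \<Rightarrow> ('a \<Rightarrow> 'b::real_normed_vector) \<Rightarrow> 'a \<Rightarrow> 'b" where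
  "bump C r u z = (if \<exists>c\<in>C. dist z c < r
     then let c = (SOME c. c \<in> C \<and> dist z c < r) in (1 - dist z c / r) *\<^sub>R u c else 0)"

lemma separated_near_unique:
  assumes "s_separated (2 * r) C" "c \<in> C" "c' \<in> C" "dist z c < r" "dist z c' < r"
  shows "c = c'"
proof (rule ccontr)
  assume "c \<noteq> c'"
  then have "2 * r \<le> dist c c'" using assms(1-3) unfolding s_separated_def by blast
  moreover have "dist c c' \<le> dist z c + dist z c'" by (rule dist_triangle3)
  ultimately show False using assms(4,5) by linarith
qed

lemma separated_near_cases:
  assumes "s_separated (2 * r) C"
  obtains (far) "\<forall>c\<in>C. r \<le> dist a c \<and> r \<le> dist b c"
    | (one) c where "c \<in> C" "\<forall>c'\<in>C. c' \<noteq> c \<longrightarrow> r \<le> dist a c' \<and> r \<le> dist b c'"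
    | (two) c c' where "c \<in> C" "c' \<in> C" "c \<noteq> c'" "dist a c < r" "dist b c' < r"
proof (cases "\<exists>c\<in>C. dist a c < r")
  case True
  then obtain c where c: "c \<in> C" "dist a c < r" by blast
  show ?thesis
  proof (cases "\<exists>c'\<in>C. c' \<noteq> c \<and> dist b c' < r")
    case True
    then show ?thesis using two c by blast
  next
    case False
    then show ?thesis using one[OF c(1)] separated_near_unique[OF assms c(1) _ c(2)] by (metis not_less)
  qed
next
  case a_far: False
  show ?thesis
  proof (cases "\<exists>c\<in>C. dist b c < r")
    case True
    then obtain c where c: "c \<in> C" "dist b c < r" by blast
    then show ?thesis using one[OF c(1)] separated_near_unique[OF assms c(1) _ c(2)] a_far by (metis not_less)
  next
    case False
    then show ?thesis using far a_far by (metis not_less)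
  qed
qed

lemma bump_eq_0:
  assumes "\<forall>c\<in>C. r \<le> dist z c"
  shows "bump C r u z = 0"
  using assms unfolding bump_def by force

lemma bump_eq_0_if_values_0:
  assumes "\<forall>c\<in>C. u c = 0"
  shows "bump C r u z = 0"
proof (cases "\<exists>c\<in>C. dist z c < r")
  case True
  then have "(SOME c. c \<in> C \<and> dist z c < r) \<in> C" by (metis (mono_tags, lifting) someI_ex)
  then show ?thesis unfolding bump_def using assms by (simp add: Let_def)
qed (simp add: bump_def)

lemma bump_eq_tent:
  assumes sep: "s_separated (2 * r) C" and "r > 0" "c \<in> C"
    and far: "\<forall>c'\<in>C. c' \<noteq> c \<longrightarrow> r \<le> dist z c'"
  shows "bump C r u z = max 0 (1 - dist z c / r) *\<^sub>R u c"
proof (cases "dist z c < r")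
  case True
  have "(SOME c. c \<in> C \<and> dist z c < r) = c"
  proof (rule some_equality)
    show "\<And>c'. c' \<in> C \<and> dist z c' < r \<Longrightarrow> c' = c"
      using separated_near_unique[OF sep] \<open>c \<in> C\<close> True by blast
  qed (use \<open>c \<in> C\<close> True in blast)
  moreover have "max 0 (1 - dist z c / r) = 1 - dist z c / r" using True \<open>r > 0\<close> by simp
  ultimately show ?thesis unfolding bump_def using \<open>c \<in> C\<close> True by (auto simp: Let_def)
next
  case False
  then have "bump C r u z = 0" using far by (intro bump_eq_0) (auto simp: not_less)
  moreover have "max 0 (1 - dist z c / r) = 0" using False \<open>r > 0\<close> by simp
  ultimately show ?thesis by simp
qed

lemma bump_at_center:
  assumes "s_separated (2 * r) C" "r > 0" "c \<in> C"
  shows "bump C r u c = u c"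
proof -
  have "\<forall>c'\<in>C. c' \<noteq> c \<longrightarrow> r \<le> dist c c'"
    using assms unfolding s_separated_def by force
  with bump_eq_tent[OF assms this] show ?thesis using \<open>r > 0\<close> by simp
qed

lemma bump_convex_form:
  assumes "s_separated (2 * r) C" "r > 0"
  shows "\<exists>c l. (l = 0 \<or> c \<in> C) \<and> 0 \<le> l \<and> l \<le> 1 \<and> (\<forall>u. bump C r u z = l *\<^sub>R u c)"
proof (cases "\<exists>c\<in>C. dist z c < r")
  case True
  then obtain c where c: "c \<in> C" "dist z c < r" by blast
  then have "\<forall>c'\<in>C. c' \<noteq> c \<longrightarrow> r \<le> dist z c'"
    using separated_near_unique[OF assms(1)] by (metis not_less)
  then show ?thesis using bump_eq_tent[OF assms c(1)] c(1) assms(2)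
    by (intro exI[of _ c] exI[of _ "max 0 (1 - dist z c / r)"]) auto
next
  case False
  then have "\<forall>c\<in>C. r \<le> dist z c" by (auto simp: not_less)
  then show ?thesis by (intro exI[of _ undefined] exI[of _ 0]) (simp add: bump_eq_0)
qed

lemma tent_lipschitz:
  assumes "r > 0"
  shows "\<bar>max 0 (1 - dist a c / r) - max 0 (1 - dist b c / r)\<bar> \<le> dist a b / r"
proof -
  have "\<bar>dist a c - dist c b\<bar> \<le> dist a b" by (rule abs_dist_diff_le)
  then have "\<bar>(1 - dist a c / r) - (1 - dist b c / r)\<bar> \<le> dist a b / r"
    using assms by (simp add: dist_commute diff_divide_distrib[symmetric] abs_divide divide_right_mono)
  then show ?thesis by linarith
qed

lemma norm_bump_le:
  assumes "s_separated (2 * r) C" "r > 0" "\<forall>c\<in>C. norm (u c) \<le> M" "c \<in> C" "dist z c < r"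
  shows "norm (bump C r u z) \<le> M / r * (r - dist z c)"
proof -
  have "\<forall>c'\<in>C. c' \<noteq> c \<longrightarrow> r \<le> dist z c'"
    using separated_near_unique[OF assms(1) assms(4) _ assms(5)] by (metis not_less)
  then have "bump C r u z = max 0 (1 - dist z c / r) *\<^sub>R u c"
    by (rule bump_eq_tent[OF assms(1,2,4)])
  also have "max 0 (1 - dist z c / r) = 1 - dist z c / r" using assms(2,5) by simp
  finally have "norm (bump C r u z) = \<bar>1 - dist z c / r\<bar> * norm (u c)" by simp
  also have "\<dots> = (1 - dist z c / r) * norm (u c)" using assms(2,5) by simp
  also have "\<dots> \<le> (1 - dist z c / r) * M"
    using assms by (intro mult_left_mono) auto
  also have "\<dots> = M / r * (r - dist z c)" using assms(2) by (simp add: field_simps)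
  finally show ?thesis .
qed

lemma bump_lipschitz:
  assumes sep: "s_separated (2 * r) C" and r: "r > 0" and M: "\<forall>c\<in>C. norm (u c) \<le> M" "0 \<le> M"
  shows "(M / r)-lipschitz_on UNIV (bump C r u)"
proof (rule lipschitz_onI)
  fix a b
  show "dist (bump C r u a) (bump C r u b) \<le> M / r * dist a b"
  proof (rule separated_near_cases[OF sep, of a b])
    assume far: "\<forall>c\<in>C. r \<le> dist a c \<and> r \<le> dist b c"
    then show ?thesis using bump_eq_0[of C r a u] bump_eq_0[of C r b u] M r by simp
  next
    fix c assume one: "c \<in> C" "\<forall>c'\<in>C. c' \<noteq> c \<longrightarrow> r \<le> dist a c' \<and> r \<le> dist b c'"
    have "dist (bump C r u a) (bump C r u b)
        = \<bar>max 0 (1 - dist a c / r) - max 0 (1 - dist b c / r)\<bar> * norm (u c)"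
      using one by (simp add: bump_eq_tent[OF sep r] dist_norm scaleR_diff_left[symmetric])
    also have "\<dots> \<le> dist a b / r * M"
      using tent_lipschitz[OF r] M one(1) r by (intro mult_mono) auto
    also have "\<dots> = M / r * dist a b" by simp
    finally show ?thesis .
  next
    fix c c' assume two: "c \<in> C" "c' \<in> C" "c \<noteq> c'" "dist a c < r" "dist b c' < r"
    have "2 * r \<le> dist c c'" using sep two(1-3) unfolding s_separated_def by blast
    moreover have "dist c c' \<le> dist a c + dist a b + dist b c'"
      using dist_triangle[of c c' b] dist_triangle[of c b a] by (simp add: dist_commute)
    ultimately have gap: "(r - dist a c) + (r - dist b c') \<le> dist a b" by linarith
    have "dist (bump C r u a) (bump C r u b) \<le> norm (bump C r u a) + norm (bump C r u b)"
      by (simp add: dist_norm norm_triangle_ineq4)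
    also have "\<dots> \<le> M / r * (r - dist a c) + M / r * (r - dist b c')"
      using norm_bump_le[OF sep r M(1)] two by (intro add_mono) auto
    also have "\<dots> = M / r * ((r - dist a c) + (r - dist b c'))" by (rule distrib_left[symmetric])
    also have "\<dots> \<le> M / r * dist a b" using gap M r by (intro mult_left_mono) auto
    finally show ?thesis .
  qed
qed (use M r in simp)

lemma exists_bilipschitz_displacement:
  fixes P :: "'a::real_normed_vector set"
  assumes sep: "s_separated s P" and s: "0 < s" "s \<le> 1/4" and v: "\<forall>p\<in>P. norm (v p) \<le> s^2"
  shows "\<exists>\<Phi>. bilipschitz_bounds 2 (3/2) \<Phi> \<and> (\<forall>p\<in>P. \<Phi> p = p + v p)
           \<and> (\<forall>z. (\<forall>p\<in>P. s/2 \<le> dist z p) \<longrightarrow> \<Phi> z = z)"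
proof (intro exI conjI allI ballI impI)
  have sep': "s_separated (2 * (s/2)) P" using sep by simp
  have "(s^2 / (s/2))-lipschitz_on UNIV (bump P (s/2) v)"
    by (rule bump_lipschitz[OF sep' _ v]) (use s in auto)
  moreover have "s^2 / (s/2) = 2 * s" using s by (simp add: power2_eq_square)
  ultimately have "bilipschitz_bounds (1 / (1 - 2 * s)) (1 + 2 * s) (\<lambda>z. z + bump P (s/2) v z)"
    using s by (intro bilipschitz_bounds_add_contraction) auto
  then show "bilipschitz_bounds 2 (3/2) (\<lambda>z. z + bump P (s/2) v z)"
    by (rule bilipschitz_bounds_mono) (use s in \<open>auto simp: field_simps\<close>)
  show "p + bump P (s/2) v p = p + v p" if "p \<in> P" for p
    using bump_at_center[OF sep' _ that] s by simp
  show "z + bump P (s/2) v z = z" if "\<forall>p\<in>P. s/2 \<le> dist z p" for z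
    using bump_eq_0[OF that] by simp
qed

lemma bilipschitz_bounds_vertical_shear:
  fixes C :: "'a::metric_space set" and h :: "'a \<Rightarrow> real \<Rightarrow> real"
  assumes sep: "s_separated (2 * r) C" and r: "r > 0"
    and slopes: "\<And>c t1 t2. c \<in> C \<Longrightarrow> t1 \<le> t2 \<Longrightarrow>
                   a * (t2 - t1) \<le> h c t2 - h c t1 \<and> h c t2 - h c t1 \<le> b * (t2 - t1)"
    and disp: "\<And>c t. c \<in> C \<Longrightarrow> \<bar>h c t - t\<bar> \<le> M"
    and a: "0 < a" "a \<le> 1" and b: "1 \<le> b" and M: "0 \<le> M"
  shows "bilipschitz_bounds (1 + M / r / a + 1 / a) (1 + M / r + b)
           (\<lambda>(z, t). (z, t + bump C r (\<lambda>c. h c t - t) z))"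
proof (rule bilipschitz_bounds_shear)
  fix z and t1 t2 :: real assume "t1 \<le> t2"
  obtain c l where cl: "l = 0 \<or> c \<in> C" "0 \<le> l" "l \<le> 1"
    and form: "\<And>u :: 'a \<Rightarrow> real. bump C r u z = l *\<^sub>R u c"
    using bump_convex_form[OF sep r, of z] by blast
  have "t2 + bump C r (\<lambda>c. h c t2 - t2) z - (t1 + bump C r (\<lambda>c. h c t1 - t1) z)
      = (1 - l) * (t2 - t1) + l * (h c t2 - h c t1)"
    by (simp add: form algebra_simps)
  moreover have "(1 - l) * (a * (t2 - t1)) \<le> (1 - l) * (t2 - t1)"
    using cl a \<open>t1 \<le> t2\<close> by (intro mult_left_mono) (auto simp: mult_left_le_one_le)
  moreover have "(1 - l) * (t2 - t1) \<le> (1 - l) * (b * (t2 - t1))"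
    using cl b \<open>t1 \<le> t2\<close> by (intro mult_left_mono) (auto simp: mult_le_cancel_right1)
  moreover have "l * (a * (t2 - t1)) \<le> l * (h c t2 - h c t1)" "l * (h c t2 - h c t1) \<le> l * (b * (t2 - t1))"
    using cl slopes[of c t1 t2] \<open>t1 \<le> t2\<close> by (auto intro: mult_left_mono)
  moreover have "a * (t2 - t1) = (1 - l) * (a * (t2 - t1)) + l * (a * (t2 - t1))"
    "b * (t2 - t1) = (1 - l) * (b * (t2 - t1)) + l * (b * (t2 - t1))" by (simp_all add: algebra_simps)
  ultimately show "a * (t2 - t1) \<le> t2 + bump C r (\<lambda>c. h c t2 - t2) z - (t1 + bump C r (\<lambda>c. h c t1 - t1) z)
    \<and> t2 + bump C r (\<lambda>c. h c t2 - t2) z - (t1 + bump C r (\<lambda>c. h c t1 - t1) z) \<le> b * (t2 - t1)"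
    by linarith
next
  fix z1 z2 t
  have "(M / r)-lipschitz_on UNIV (bump C r (\<lambda>c. h c t - t))"
    using disp by (intro bump_lipschitz[OF sep r _ M]) auto
  then show "\<bar>t + bump C r (\<lambda>c. h c t - t) z1 - (t + bump C r (\<lambda>c. h c t - t) z2)\<bar> \<le> M / r * dist z1 z2"
    by (auto simp: dist_real_def dest: lipschitz_onD)
qed (use a b M r in auto)

section \<open>Moving points bilipschitzly\<close>

text \<open>The piecewise-linear map that fixes every point outside \<open>(lo, hi)\<close> and sends \<open>t\<close> to \<open>m\<close>;
  its slopes are \<open>(m - lo) / (t - lo)\<close> on \<open>[lo, t]\<close> and \<open>(hi - m) / (hi - t)\<close> on \<open>[t, hi]\<close>.\<close>

definition pwl_map :: "real \<Rightarrow> real \<Rightarrow> real \<Rightarrow> real \<Rightarrow> real \<Rightarrow> real" where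
  "pwl_map lo hi t m x = x + ((m - lo) / (t - lo) - 1) * (max lo (min x t) - lo)
     + ((hi - m) / (hi - t) - 1) * (max t (min x hi) - t)"

lemma pwl_map_at:
  assumes "lo < t" "t < hi"
  shows "pwl_map lo hi t m t = m"
proof -
  have "max lo (min t t) = t" "max t (min t hi) = t" using assms by auto
  moreover have "((m - lo) / (t - lo) - 1) * (t - lo) = m - t" using assms(1) by (simp add: field_simps)
  ultimately show ?thesis by (simp add: pwl_map_def)
qed

lemma pwl_map_outside:
  assumes "lo < t" "t < hi" "x \<le> lo \<or> hi \<le> x"
  shows "pwl_map lo hi t m x = x"
proof (cases "x \<le> lo")
  case True
  then have "max lo (min x t) = lo" "max t (min x hi) = t" using assms by auto
  then show ?thesis by (simp add: pwl_map_def)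
next
  case False
  then have "max lo (min x t) = t" "max t (min x hi) = hi" using assms by auto
  moreover have "((m - lo) / (t - lo) - 1) * (t - lo) = m - t"
    "((hi - m) / (hi - t) - 1) * (hi - t) = t - m" using assms(1,2) by (simp_all add: field_simps)
  ultimately show ?thesis by (simp add: pwl_map_def)
qed

lemma pwl_map_slopes:
  assumes "lo < t" "t < hi" "x \<le> y"
    and a: "a \<le> 1" "a \<le> (m - lo) / (t - lo)" "a \<le> (hi - m) / (hi - t)"
    and b: "1 \<le> b" "(m - lo) / (t - lo) \<le> b" "(hi - m) / (hi - t) \<le> b"
  shows "a * (y - x) \<le> pwl_map lo hi t m y - pwl_map lo hi t m x
    \<and> pwl_map lo hi t m y - pwl_map lo hi t m x \<le> b * (y - x)"
proof -
  define s1 s2 where "s1 = (m - lo) / (t - lo)" and "s2 = (hi - m) / (hi - t)"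
  define d1 where "d1 = max lo (min y t) - max lo (min x t)"
  define d2 where "d2 = max t (min y hi) - max t (min x hi)"
  define d0 where "d0 = y - x - d1 - d2"
  have d: "0 \<le> d0" "0 \<le> d1" "0 \<le> d2"
    using assms(1-3) unfolding d0_def d1_def d2_def by (auto simp: max_def min_def)
  have pwl: "pwl_map lo hi t m z = z + (s1 - 1) * (max lo (min z t) - lo) + (s2 - 1) * (max t (min z hi) - t)"
    for z unfolding pwl_map_def s1_def s2_def ..
  have diff: "pwl_map lo hi t m y - pwl_map lo hi t m x = d0 + s1 * d1 + s2 * d2"
    unfolding pwl d0_def d1_def d2_def by (simp add: algebra_simps)
  have slopes: "a \<le> s1" "a \<le> s2" "s1 \<le> b" "s2 \<le> b" using a b unfolding s1_def s2_def by auto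
  have "a * (y - x) = a * d0 + a * d1 + a * d2" "b * (y - x) = b * d0 + b * d1 + b * d2"
    unfolding d0_def by (simp_all add: algebra_simps)
  moreover have "a * d0 \<le> 1 * d0" "a * d1 \<le> s1 * d1" "a * d2 \<le> s2 * d2"
    using mult_right_mono[OF a(1) d(1)] mult_right_mono[OF slopes(1) d(2)] mult_right_mono[OF slopes(2) d(3)] .
  moreover have "1 * d0 \<le> b * d0" "s1 * d1 \<le> b * d1" "s2 * d2 \<le> b * d2"
    using mult_right_mono[OF b(1) d(1)] mult_right_mono[OF slopes(3) d(2)] mult_right_mono[OF slopes(4) d(3)] .
  ultimately show ?thesis unfolding diff by linarith
qed

lemma pwl_map_displacement_le:
  assumes "lo < t" "t < hi" "lo \<le> m" "m \<le> hi"
  shows "\<bar>pwl_map lo hi t m x - x\<bar> \<le> hi - lo"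
proof (cases "x \<le> lo \<or> hi \<le> x")
  case True
  then show ?thesis using pwl_map_outside[OF assms(1,2)] assms(1,2) by simp
next
  case False
  define b where "b = max 1 (max ((m - lo) / (t - lo)) ((hi - m) / (hi - t)))"
  have "0 \<le> (m - lo) / (t - lo)" "0 \<le> (hi - m) / (hi - t)" using assms by auto
  then have mono: "pwl_map lo hi t m u \<le> pwl_map lo hi t m v" if "u \<le> v" for u v
    using pwl_map_slopes[OF assms(1,2) that, of 0 m b] unfolding b_def by auto
  have "lo \<le> pwl_map lo hi t m x" "pwl_map lo hi t m x \<le> hi"
    using mono[of lo x] mono[of x hi] False pwl_map_outside[OF assms(1,2)] by auto
  then show ?thesis using False by linarith
qed

lemma pwl_map_slab_bounds:
  fixes H s t m :: real
  assumes H: "1 \<le> H" and s: "0 < s" "s \<le> 1"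
    and t: "1/2 + s \<le> t" "t \<le> H + 1/2 - s" and m: "1 \<le> m" "m \<le> H"
  shows "\<bar>pwl_map (1/2) (H + 1/2) t m u - u\<bar> \<le> H"
    and "u1 \<le> u2 \<Longrightarrow> 1 / (2 * H) * (u2 - u1) \<le> pwl_map (1/2) (H + 1/2) t m u2 - pwl_map (1/2) (H + 1/2) t m u1
      \<and> pwl_map (1/2) (H + 1/2) t m u2 - pwl_map (1/2) (H + 1/2) t m u1 \<le> H / s * (u2 - u1)"
proof -
  have between: "1/2 < t" "t < H + 1/2" using t s by linarith+
  show "\<bar>pwl_map (1/2) (H + 1/2) t m u - u\<bar> \<le> H"
    using pwl_map_displacement_le[OF between] m by simp
  assume "u1 \<le> u2"
  then show "1 / (2 * H) * (u2 - u1) \<le> pwl_map (1/2) (H + 1/2) t m u2 - pwl_map (1/2) (H + 1/2) t m u1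
      \<and> pwl_map (1/2) (H + 1/2) t m u2 - pwl_map (1/2) (H + 1/2) t m u1 \<le> H / s * (u2 - u1)"
  proof (rule pwl_map_slopes[OF between])
    have half: "1 / (2 * H) = (1/2) / H" by simp
    show "1 / (2 * H) \<le> 1" "1 \<le> H / s" using H s by (auto simp: field_simps)
    show "1 / (2 * H) \<le> (m - 1/2) / (t - 1/2)" "1 / (2 * H) \<le> (H + 1/2 - m) / (H + 1/2 - t)"
      unfolding half using t m s by (intro frac_le; linarith)+
    show "(m - 1/2) / (t - 1/2) \<le> H / s" "(H + 1/2 - m) / (H + 1/2 - t) \<le> H / s"
      using t m s by (intro frac_le; linarith)+
  qed
qed

lemma exists_bilipschitz_vertical_move:
  fixes C :: "'a::metric_space set" and H s N :: real and t m :: "'a \<Rightarrow> real"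
  assumes H: "1 \<le> H" and s: "0 < s" "s \<le> 1" and N: "0 < N" and sep: "s_separated (1 / N) C"
    and t: "\<forall>c\<in>C. 1/2 + s \<le> t c \<and> t c \<le> H + 1/2 - s" and m: "\<forall>c\<in>C. 1 \<le> m c \<and> m c \<le> H"
  shows "\<exists>G. bilipschitz_bounds (1 + 4 * N * H^2 + 2 * H) (1 + 2 * N * H + H / s) G
           \<and> (\<forall>x u. u \<notin> {1/2 <..< H + 1/2} \<longrightarrow> G (x, u) = (x, u))
           \<and> (\<forall>c\<in>C. G (c, t c) = (c, m c))"
proof -
  define r where "r = 1 / (2 * N)"
  define h where "h c = pwl_map (1/2) (H + 1/2) (t c) (m c)" for c
  define G where "G = (\<lambda>(z, u). (z, u + bump C r (\<lambda>c. h c u - u) z))"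
  have r: "0 < r" "s_separated (2 * r) C" using sep N unfolding r_def by simp_all
  have between: "1/2 < t c" "t c < H + 1/2" if "c \<in> C" for c using t s that by force+
  note h_bounds = pwl_map_slab_bounds[OF H s, of "t c" "m c" for c, folded h_def]
  have "bilipschitz_bounds (1 + H / r / (1 / (2 * H)) + 1 / (1 / (2 * H))) (1 + H / r + H / s) G"
    unfolding G_def using t m
    by (intro bilipschitz_bounds_vertical_shear[OF r(2) r(1)] h_bounds) (use H s in \<open>auto simp: field_simps\<close>)
  moreover have "H / r / (1 / (2 * H)) = 4 * N * H^2" "1 / (1 / (2 * H)) = 2 * H" "H / r = 2 * N * H"
    unfolding r_def by (simp_all add: power2_eq_square)
  ultimately have "bilipschitz_bounds (1 + 4 * N * H^2 + 2 * H) (1 + 2 * N * H + H / s) G" by (simp only:)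
  moreover have "G (x, u) = (x, u)" if "u \<notin> {1/2 <..< H + 1/2}" for x u
  proof -
    have "h c u - u = 0" if "c \<in> C" for c
      using pwl_map_outside[OF between[OF that]] \<open>u \<notin> _\<close> unfolding h_def by force
    then show ?thesis unfolding G_def by (simp add: bump_eq_0_if_values_0)
  qed
  moreover have "G (c, t c) = (c, m c)" if "c \<in> C" for c
    using bump_at_center[OF r(2) r(1) that, of "\<lambda>c'. h c' (t c) - t c"] pwl_map_at[OF between[OF that]]
    unfolding G_def h_def by simp
  ultimately show ?thesis by auto
qed

lemma bilipschitz_constants_le:
  fixes H s N :: real
  assumes H: "1 \<le> H" and s: "0 < s" "s \<le> 1/4" and N: "8 / s \<le> N"
  shows "2 * (1 + 4 * N * H^2 + 2 * H) \<le> 2^8 * N^2 * H^2"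
    and "(1 + 2 * N * H + H / s) * (3/2) \<le> 2^8 * N^2 * H^2"
proof -
  have "32 \<le> 8 / s" using s by (simp add: field_simps)
  then have N1: "1 \<le> N" using N by linarith
  have "1 * 1 \<le> N * H" using N1 H by (intro mult_mono) auto
  then have NH: "1 \<le> N * H" by simp
  have "N * H \<le> (N * H) * (N * H)" using NH by (simp add: mult_le_cancel_left1)
  moreover have "H \<le> N * H" using N1 H by (simp add: mult_le_cancel_right1)
  moreover have "N * H * H \<le> (N * H) * (N * H)" using N1 H NH by (simp add: mult_le_cancel_right1 mult.assoc)
  moreover have "H / s \<le> N * H / 8" using N s H by (simp add: field_simps)
  ultimately show "2 * (1 + 4 * N * H^2 + 2 * H) \<le> 2^8 * N^2 * H^2"
    and "(1 + 2 * N * H + H / s) * (3/2) \<le> 2^8 * N^2 * H^2"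
    using NH by (simp_all add: power2_eq_square field_simps)
qed

lemma exists_bilipschitz_moving_points:
  fixes P :: "('a::real_normed_vector \<times> real) set" and H :: nat and s N :: real
    and y :: "'a \<times> real \<Rightarrow> 'a" and level :: "'a \<times> real \<Rightarrow> nat"
  assumes H: "H \<ge> 1" and s: "0 < s" "s \<le> 1/4" and N: "8 / s \<le> N"
    and sub: "P \<subseteq> UNIV \<times> {1/2 + s .. real H + 1/2 - s}" and sep: "s_separated s P"
    and y: "inj_on y P" "s_separated (1 / N) (y ` P)" "\<forall>p\<in>P. norm (y p - fst p) \<le> s^2"
    and level: "\<forall>p\<in>P. level p \<in> {1..H}"
  shows "\<exists>\<Psi>. bilipschitz (2^8 * N^2 * (real H)^2) \<Psi>
           \<and> (\<forall>x t. t \<notin> {1/2 <..< real H + 1/2} \<longrightarrow> \<Psi> (x, t) = (x, t))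
           \<and> (\<forall>p\<in>P. \<Psi> p = (y p, real (level p)))"
proof -
  have "0 < 8 / s" using s by simp
  then have "0 < N" using N by linarith
  obtain \<Phi> where \<Phi>: "bilipschitz_bounds 2 (3/2) \<Phi>" "\<forall>p\<in>P. \<Phi> p = p + (y p - fst p, 0)"
      "\<forall>z. (\<forall>p\<in>P. s/2 \<le> dist z p) \<longrightarrow> \<Phi> z = z"
    using exists_bilipschitz_displacement[OF sep s, of "\<lambda>p. (y p - fst p, 0)"] y(3)
    by (auto simp: norm_Pair)
  define src where "src c = inv_into P y c" for c
  have src: "src (y p) = p" if "p \<in> P" for p
    unfolding src_def using y(1) that by simp
  obtain G where G: "bilipschitz_bounds (1 + 4 * N * (real H)^2 + 2 * real H) (1 + 2 * N * real H + real H / s) G"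
      "\<forall>x t. t \<notin> {1/2 <..< real H + 1/2} \<longrightarrow> G (x, t) = (x, t)"
      "\<forall>c\<in>y ` P. G (c, snd (src c)) = (c, real (level (src c)))"
    using exists_bilipschitz_vertical_move[OF _ s(1) _ \<open>0 < N\<close> y(2), of "real H" "\<lambda>c. snd (src c)"
        "\<lambda>c. real (level (src c))"] H s sub level src by force
  have "bilipschitz (2^8 * N^2 * (real H)^2) (G \<circ> \<Phi>)"
    using bilipschitz_if_bilipschitz_bounds[OF bilipschitz_bounds_comp[OF \<Phi>(1) G(1)]]
      bilipschitz_constants_le[of "real H" s N] H s N by simp
  moreover have "(G \<circ> \<Phi>) (x, t) = (x, t)" if "t \<notin> {1/2 <..< real H + 1/2}" for x t
  proof -
    have "s/2 \<le> dist (x, t) p" if "p \<in> P" for p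
      using dist_snd_le[of "(x, t)" p] sub that s \<open>t \<notin> _\<close> by (force simp: dist_real_def)
    then show ?thesis using \<Phi>(3) G(2) that by simp
  qed
  moreover have "(G \<circ> \<Phi>) p = (y p, real (level p))" if "p \<in> P" for p
    using \<Phi>(2) G(3) src that by (cases p) force
  ultimately show ?thesis by blast
qed

section \<open>Assigning lattice points\<close>

lemma card_separated_values_le:
  fixes f :: "'a \<Rightarrow> real"
  assumes "0 < \<delta>" "\<forall>p\<in>P. f p \<in> {lo..hi}"
    and "\<forall>p\<in>P. \<forall>q\<in>P. p \<noteq> q \<longrightarrow> \<delta> \<le> \<bar>f p - f q\<bar>"
  shows "finite P \<and> card P \<le> nat \<lfloor>(hi - lo) / \<delta>\<rfloor> + 1"
proof -
  define bin where "bin p = \<lfloor>(f p - lo) / \<delta>\<rfloor>" for p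
  have "inj_on bin P"
  proof (rule inj_onI, rule ccontr)
    fix p q assume pq: "p \<in> P" "q \<in> P" "bin p = bin q" "p \<noteq> q"
    then have "\<bar>(f p - lo) / \<delta> - (f q - lo) / \<delta>\<bar> < 1" unfolding bin_def by linarith
    then have "\<bar>f p - f q\<bar> < \<delta>" using assms(1) by (simp add: diff_divide_distrib[symmetric] abs_divide)
    then show False using assms(3) pq by force
  qed
  moreover have bins: "bin ` P \<subseteq> {0 .. \<lfloor>(hi - lo) / \<delta>\<rfloor>}"
    using assms(1,2) unfolding bin_def by (auto intro!: floor_mono divide_right_mono)
  ultimately have "finite P" by (meson finite_atLeastAtMost_int finite_imageD finite_subset)
  moreover have "card P \<le> card {0 .. \<lfloor>(hi - lo) / \<delta>\<rfloor>}"
    using card_image[OF \<open>inj_on bin P\<close>] card_mono[OF _ bins] by simp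
  ultimately show ?thesis by simp
qed

lemma exists_inj_on_into_fibre_targets:
  assumes "\<And>k. finite {p\<in>P. key p = k}" "\<And>k. finite (T k)" "\<And>k. card {p\<in>P. key p = k} \<le> card (T k)"
    and "\<And>x k k'. x \<in> T k \<Longrightarrow> x \<in> T k' \<Longrightarrow> k = k'"
  obtains y where "inj_on y P" "\<forall>p\<in>P. y p \<in> T (key p)"
proof -
  have "\<exists>f. f ` {p\<in>P. key p = k} \<subseteq> T k \<and> inj_on f {p\<in>P. key p = k}" for k
    using assms(1-3) by (rule card_le_inj)
  then obtain f where f: "\<And>k. f k ` {p\<in>P. key p = k} \<subseteq> T k" "\<And>k. inj_on (f k) {p\<in>P. key p = k}"
    by metis
  define y where "y p = f (key p) p" for p
  have y: "y p \<in> T (key p)" if "p \<in> P" for p using f(1) that unfolding y_def by blast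
  have "inj_on y P"
  proof (rule inj_onI)
    fix p p' assume pp: "p \<in> P" "p' \<in> P" "y p = y p'"
    then have "key p = key p'" using y assms(4) by metis
    then show "p = p'" using f(2)[of "key p"] pp unfolding y_def by (auto dest: inj_onD)
  qed
  with y show ?thesis using that by blast
qed

lemma card_separated_column_le:
  fixes P :: "('a::real_normed_vector \<times> real) set"
  assumes sep: "s_separated s P" and s: "0 < s" "s \<le> 1/4" and sub: "P \<subseteq> UNIV \<times> {lo..hi}"
    and close: "\<forall>p\<in>P. \<forall>q\<in>P. norm (fst p - fst q) < s^2"
  shows "finite P \<and> card P \<le> nat \<lfloor>2 * (hi - lo) / s\<rfloor> + 1"
proof -
  have "s/2 \<le> \<bar>snd p - snd q\<bar>" if "p \<in> P" "q \<in> P" "p \<noteq> q" for p q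
  proof -
    have "s \<le> dist p q" using sep that unfolding s_separated_def by blast
    also have "\<dots> \<le> norm (fst p - fst q) + \<bar>snd p - snd q\<bar>"
      using dist_Pair_le_add[of "fst p" "snd p" "fst q" "snd q"] by (simp add: dist_norm dist_real_def)
    finally have "s \<le> s^2 + \<bar>snd p - snd q\<bar>" using close that by fastforce
    moreover have "s^2 \<le> s/2" using s by (simp add: power2_eq_square)
    ultimately show ?thesis by linarith
  qed
  moreover have "\<forall>p\<in>P. snd p \<in> {lo..hi}" using sub by auto
  ultimately have "finite P \<and> card P \<le> nat \<lfloor>(hi - lo) / (s/2)\<rfloor> + 1"
    using s by (intro card_separated_values_le) auto
  then show ?thesis by (simp add: field_simps)
qed

definition grid_index :: "real \<Rightarrow> real^'n \<Rightarrow> 'n \<Rightarrow> int" where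
  "grid_index l x = (\<lambda>i. \<lfloor>x $ i / l\<rfloor>)"

definition grid_cube :: "real \<Rightarrow> ('n \<Rightarrow> int) \<Rightarrow> (real^'n) set" where
  "grid_cube l k = {x. grid_index l x = k}"

lemma mem_grid_cube_iff:
  assumes "0 < l"
  shows "x \<in> grid_cube l k \<longleftrightarrow> (\<forall>i. k i * l \<le> x $ i \<and> x $ i < k i * l + l)"
  using assms by (auto simp: grid_cube_def grid_index_def fun_eq_iff floor_eq_iff field_simps)

lemma norm_diff_lt_in_grid_cube:
  fixes l :: real and x y :: "real^'n"
  assumes "0 < l" "x \<in> grid_cube l k" "y \<in> grid_cube l k"
  shows "norm (x - y) < CARD('n) * l"
proof -
  have bounds: "k i * l \<le> x $ i \<and> x $ i < k i * l + l" "k i * l \<le> y $ i \<and> y $ i < k i * l + l" for i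
    using assms(2,3) unfolding mem_grid_cube_iff[OF assms(1)] by blast+
  have "\<bar>(x - y) $ i\<bar> < l" for i using bounds[of i] by (simp add: abs_less_iff)
  then have "(\<Sum>i\<in>UNIV. \<bar>(x - y) $ i\<bar>) < (\<Sum>i\<in>(UNIV::'n set). l)" by (intro sum_strict_mono) auto
  then show ?thesis using norm_le_l1_cart[of "x - y"] by simp
qed

lemma card_grid_column_le:
  fixes P :: "((real^'n) \<times> real) set" and s l :: real
  assumes "s_separated s P" "0 < s" "s \<le> 1/4" "P \<subseteq> UNIV \<times> {lo..hi}" "0 < l" "CARD('n) * l = s^2"
  shows "finite {p\<in>P. grid_index l (fst p) = k}
    \<and> card {p\<in>P. grid_index l (fst p) = k} \<le> nat \<lfloor>2 * (hi - lo) / s\<rfloor> + 1"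
proof (rule card_separated_column_le)
  show "\<forall>p\<in>{p\<in>P. grid_index l (fst p) = k}. \<forall>p'\<in>{p\<in>P. grid_index l (fst p) = k}.
      norm (fst p - fst p') < s^2"
  proof (intro ballI)
    fix p p' assume "p \<in> {p\<in>P. grid_index l (fst p) = k}" "p' \<in> {p\<in>P. grid_index l (fst p) = k}"
    then have "norm (fst p - fst p') < CARD('n) * l"
      by (intro norm_diff_lt_in_grid_cube[OF assms(5)]) (auto simp: grid_cube_def)
    then show "norm (fst p - fst p') < s^2" using assms(6) by simp
  qed
qed (use assms in \<open>auto simp: s_separated_def\<close>)

lemma card_nonint_multiples_in_interval_ge:
  fixes b l N :: real
  assumes "0 < l" "l < 1" "0 < N"
  defines "V \<equiv> {j::int. b \<le> j / N \<and> j / N < b + l \<and> j / N \<notin> \<int>}"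
  shows "finite V" "nat (\<lfloor>l * N\<rfloor> - 1) \<le> card V"
proof -
  define W where "W = {\<lceil>b * N\<rceil> ..< \<lceil>(b + l) * N\<rceil>}"
  define Z where "Z = {j\<in>W. j / N \<in> \<int>}"
  have W: "W = {j::int. b \<le> j / N \<and> j / N < b + l}"
    unfolding W_def using assms(3) by (auto simp: field_simps ceiling_le_iff less_ceiling_iff)
  then have V: "V = W - Z" unfolding V_def Z_def by blast
  have "finite W" "Z \<subseteq> W" unfolding W_def Z_def by auto
  then have fin: "finite W" "finite Z" "Z \<subseteq> W" using finite_subset by auto
  then show "finite V" unfolding V by simp
  have "card Z \<le> Suc 0"
    unfolding card_le_Suc0_iff_eq[OF fin(2)]
  proof (intro ballI)
    fix j1 j2 assume j: "j1 \<in> Z" "j2 \<in> Z"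
    then obtain n1 n2 where n: "j1 / N = of_int n1" "j2 / N = of_int n2"
      unfolding Z_def by (auto elim!: Ints_cases)
    have "\<bar>real_of_int (n1 - n2)\<bar> < 1" using j n assms(2) unfolding Z_def W by auto
    then have "n1 = n2" by linarith
    then show "j1 = j2" using n assms(3) by (simp add: field_simps)
  qed
  moreover have "nat \<lfloor>l * N\<rfloor> \<le> card W"
  proof -
    have "\<lceil>b * N\<rceil> + \<lfloor>l * N\<rfloor> - 1 < b * N + l * N"
      using ceiling_correct[of "b * N"] of_int_floor_le[of "l * N"] by linarith
    then have "\<lceil>b * N\<rceil> + \<lfloor>l * N\<rfloor> \<le> \<lceil>(b + l) * N\<rceil>"
      using le_of_int_ceiling[of "(b + l) * N"] by (simp add: distrib_right) linarith
    then show ?thesis unfolding W_def by simp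
  qed
  ultimately show "nat (\<lfloor>l * N\<rfloor> - 1) \<le> card V" unfolding V using card_Diff_subset[OF fin(2,3)] by linarith
qed

lemma exists_nonint_lattice_points_in_grid_cube:
  fixes k :: "'n::finite \<Rightarrow> int"
  assumes "0 < l" "l < 1" "0 < N"
  shows "\<exists>T. T \<subseteq> grid_cube l k \<inter> (scaled_lattice N - int_lattice) \<and> finite T
           \<and> nat (\<lfloor>l * N\<rfloor> - 1) ^ CARD('n) \<le> card T"
proof -
  define V where "V i = {j::int. k i * l \<le> j / N \<and> j / N < k i * l + l \<and> j / N \<notin> \<int>}" for i :: 'n
  define pt where "pt j = (\<chi> i. real_of_int (j i) / N)" for j :: "'n \<Rightarrow> int"
  have "inj_on pt (PiE UNIV V)"
    using assms(3) by (intro inj_onI) (auto simp: pt_def vec_eq_iff fun_eq_iff)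
  then have "card (pt ` PiE UNIV V) = (\<Prod>i\<in>UNIV. card (V i))" by (simp add: card_image card_PiE)
  also have "\<dots> \<ge> (\<Prod>i\<in>(UNIV::'n set). nat (\<lfloor>l * N\<rfloor> - 1))"
    using card_nonint_multiples_in_interval_ge(2)[OF assms] unfolding V_def by (intro prod_mono) auto
  finally have "nat (\<lfloor>l * N\<rfloor> - 1) ^ CARD('n) \<le> card (pt ` PiE UNIV V)" by simp
  moreover have "finite (pt ` PiE UNIV V)"
    using card_nonint_multiples_in_interval_ge(1)[OF assms] unfolding V_def by (intro finite_imageI finite_PiE) auto
  moreover have "pt j \<in> grid_cube l k \<inter> (scaled_lattice N - int_lattice)" if "j \<in> PiE UNIV V" for j
  proof -
    have j: "j i \<in> V i" and pt: "pt j $ i = j i / N" for i using that by (auto simp: pt_def)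
    then have "pt j \<in> grid_cube l k" unfolding mem_grid_cube_iff[OF assms(1)] by (simp add: V_def)
    moreover have "pt j $ i \<notin> \<int>" for i using j[of i] by (simp add: pt V_def)
    ultimately show ?thesis unfolding scaled_lattice_def int_lattice_def using pt by auto
  qed
  ultimately show ?thesis by (intro exI[of _ "pt ` PiE UNIV V"]) blast
qed

lemma s_separated_scaled_lattice:
  assumes "0 < N"
  shows "s_separated (1 / N) (scaled_lattice N)"
  unfolding s_separated_def
proof (intro ballI impI)
  fix a b :: "real^'n" assume ab: "a \<in> scaled_lattice N" "b \<in> scaled_lattice N" "a \<noteq> b"
  then obtain i where i: "a $ i \<noteq> b $ i" by (metis vec_eq_iff)
  obtain k1 k2 :: int where k: "a $ i = k1 / N" "b $ i = k2 / N"
    using ab(1,2) unfolding scaled_lattice_def by blast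
  then have "1 \<le> \<bar>real_of_int k1 - real_of_int k2\<bar>" using i by auto
  then have "1 / N \<le> \<bar>(a - b) $ i\<bar>"
    using k assms by (simp add: diff_divide_distrib[symmetric] abs_divide divide_right_mono)
  also have "\<dots> \<le> dist a b" unfolding dist_norm by (rule component_le_norm_cart)
  finally show "1 / N \<le> dist a b" .
qed

lemma threshold_ge:
  fixes D H :: nat and s N :: real
  assumes D: "D \<ge> 1" and s: "0 < s"
    and N: "N \<ge> (2 * sqrt (real (D + 1)) / s) ^ 3 * real H powr (1 / real D)"
  shows "8 * D / s^3 * real H powr (1 / real D) \<le> N"
proof -
  have "real D \<le> real (D + 1) * 1" by simp
  also have "\<dots> \<le> real (D + 1) * sqrt (real (D + 1))" by (intro mult_left_mono) auto
  also have "\<dots> = sqrt (real (D + 1)) ^ 3" by (simp add: power3_eq_cube)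
  finally have "8 * D / s^3 \<le> (2 * sqrt (real (D + 1)) / s) ^ 3"
    using s by (simp add: power_divide power_mult_distrib divide_right_mono)
  then show ?thesis using N by (meson mult_right_mono order_trans powr_ge_zero)
qed

lemma threshold_ge_8_div:
  fixes D H :: nat and s N :: real
  assumes D: "D \<ge> 1" and H: "H \<ge> 1" and s: "0 < s" "s \<le> 1/4"
    and N: "N \<ge> (2 * sqrt (real (D + 1)) / s) ^ 3 * real H powr (1 / real D)"
  shows "8 / s \<le> N"
proof -
  have "1 \<le> real H powr (1 / real D)" using H by (intro ge_one_powr_ge_zero) auto
  moreover have "8 / s \<le> 8 * D / s^3"
  proof -
    have "s^3 \<le> s * 1" using s by (simp add: power3_eq_cube mult_le_one)
    then have "8 / s \<le> 8 / s^3" using s by (intro divide_left_mono) auto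
    also have "\<dots> \<le> 8 * D / s^3" using D s by (intro divide_right_mono) auto
    finally show ?thesis .
  qed
  ultimately have "8 / s * 1 \<le> 8 * D / s^3 * real H powr (1 / real D)"
    using s by (intro mult_mono) auto
  then show ?thesis using threshold_ge[OF D s(1) N] by simp
qed

lemma threshold_gives_enough_grid_points:
  fixes D H :: nat and s N :: real
  assumes D: "D \<ge> 1" and H: "H \<ge> 1" and s: "0 < s" "s \<le> 1/4"
    and N: "N \<ge> (2 * sqrt (real (D + 1)) / s) ^ 3 * real H powr (1 / real D)"
  shows "nat \<lfloor>2 * H / s\<rfloor> + 1 \<le> nat (\<lfloor>s^2 / D * N\<rfloor> - 1) ^ D"
proof -
  define R where "R = real H powr (1 / real D)"
  have R: "1 \<le> R" "R ^ D = real H"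
    unfolding R_def using H D by (auto simp: ge_one_powr_ge_zero powr_realpow[symmetric] powr_powr)
  have s4: "4 \<le> 1 / s" using s by (simp add: field_simps)
  have "8 * R / s = s^2 / D * (8 * D / s^3 * R)" using s D by (simp add: field_simps power2_eq_square power3_eq_cube)
  also have "\<dots> \<le> s^2 / D * N" using threshold_ge[OF D s(1) N] s by (intro mult_left_mono) (auto simp: R_def)
  finally have "8 * R / s \<le> s^2 / D * N" .
  moreover have "16 \<le> 4 * R / s"
  proof -
    have "4 * 1 \<le> 1 / s * R" using s4 R(1) s by (intro mult_mono) auto
    then show ?thesis using s by (simp add: field_simps)
  qed
  moreover have "s^2 / D * N < real_of_int \<lfloor>s^2 / D * N\<rfloor> + 1" by (rule real_of_int_floor_add_one_gt)
  moreover have "4 / s * R = 4 * R / s" "8 * R / s = 2 * (4 * R / s)" by simp_all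
  ultimately have q: "4 / s * R \<le> real_of_int (\<lfloor>s^2 / D * N\<rfloor> - 1)"
    by (simp only: of_int_diff of_int_1)
  have "4 * 1 \<le> 1 / s * H" using s4 H s by (intro mult_mono) auto
  then have "2 * H / s + 1 \<le> 4 / s * H" using s by (simp add: field_simps)
  also have "\<dots> \<le> (4 / s) ^ D * H"
    using s4 D by (intro mult_right_mono power_increasing[of 1 D "4/s", simplified]) auto
  also have "\<dots> = (4 / s * R) ^ D" by (simp only: power_mult_distrib R(2))
  also have "\<dots> \<le> real (nat (\<lfloor>s^2 / D * N\<rfloor> - 1)) ^ D"
    using q s R(1) by (intro power_mono) auto
  finally have "2 * H / s + 1 \<le> real (nat (\<lfloor>s^2 / D * N\<rfloor> - 1) ^ D)" by simp
  moreover have "real (nat \<lfloor>2 * H / s\<rfloor> + 1) \<le> 2 * H / s + 1"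
    using s of_int_floor_le[of "2 * H / s"] by (simp add: of_nat_nat)
  ultimately show ?thesis by (simp only: of_nat_le_iff[symmetric])
qed

lemma exists_lattice_assignment:
  fixes P :: "((real^'n) \<times> real) set" and H :: nat and s N :: real
  assumes H: "H \<ge> 1" and s: "0 < s" "s \<le> 1/4"
    and N: "N \<ge> (2 * sqrt (real (CARD('n) + 1)) / s) ^ 3 * real H powr (1 / real CARD('n))"
    and sub: "P \<subseteq> UNIV \<times> {1/2 + s .. real H + 1/2 - s}" and sep: "s_separated s P"
  shows "\<exists>y. inj_on y P \<and> (\<forall>p\<in>P. y p \<in> scaled_lattice N - int_lattice \<and> norm (y p - fst p) \<le> s^2)"
proof -
  define D where "D = CARD('n)"
  have D: "D \<ge> 1" unfolding D_def by (simp add: Suc_leI)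
  define l where "l = s^2 / D"
  define q where "q = nat (\<lfloor>l * N\<rfloor> - 1)"
  have l: "0 < l" "l < 1" "D * l = s^2"
  proof -
    have "s^2 \<le> 1/16" using s by (simp add: power2_eq_square mult_mono[of s "1/4" s "1/4", simplified])
    then show "0 < l" "l < 1" "D * l = s^2" unfolding l_def using s D by (auto simp: field_simps)
  qed
  have "N \<ge> 8 / s" using threshold_ge_8_div[OF D H s N[folded D_def]] .
  moreover have "0 < 8 / s" using s by simp
  ultimately have "0 < N" by linarith
  define key where "key p = grid_index l (fst p)" for p :: "(real^'n) \<times> real"
  have fibre: "finite {p\<in>P. key p = k}" "card {p\<in>P. key p = k} \<le> q ^ D" for k
  proof -
    have "nat \<lfloor>2 * (real H + 1/2 - s - (1/2 + s)) / s\<rfloor> \<le> nat \<lfloor>2 * H / s\<rfloor>"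
      using s by (intro nat_mono floor_mono divide_right_mono) auto
    moreover have "nat \<lfloor>2 * H / s\<rfloor> + 1 \<le> q ^ D"
      using threshold_gives_enough_grid_points[OF D H s N[folded D_def]] unfolding q_def l_def .
    ultimately show "finite {p\<in>P. key p = k}" "card {p\<in>P. key p = k} \<le> q ^ D"
      using card_grid_column_le[OF sep s sub l(1) l(3)[unfolded D_def], of k] unfolding key_def by linarith+
  qed
  have "\<forall>k :: 'n \<Rightarrow> int. \<exists>T. T \<subseteq> grid_cube l k \<inter> (scaled_lattice N - int_lattice)
      \<and> finite T \<and> q ^ D \<le> card T"
    unfolding q_def D_def by (intro allI exists_nonint_lattice_points_in_grid_cube[OF l(1,2) \<open>0 < N\<close>])
  then obtain T where T: "\<forall>k :: 'n \<Rightarrow> int. T k \<subseteq> grid_cube l k \<inter> (scaled_lattice N - int_lattice)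
      \<and> finite (T k) \<and> q ^ D \<le> card (T k)"
    by (rule choice[THEN exE])
  obtain y where y: "inj_on y P" "\<forall>p\<in>P. y p \<in> T (key p)"
  proof (rule exists_inj_on_into_fibre_targets)
    show "finite {p\<in>P. key p = k}" "finite (T k)" "card {p\<in>P. key p = k} \<le> card (T k)" for k
      using fibre[of k] spec[OF T, of k] by auto
    show "k = k'" if "x \<in> T k" "x \<in> T k'" for x k k'
      using that T unfolding grid_cube_def by blast
  qed
  have "y p \<in> grid_cube l (key p)" "y p \<in> scaled_lattice N - int_lattice" if "p \<in> P" for p
    using T y(2) that by blast+
  moreover have "norm (y p - fst p) < D * l" if "p \<in> P" for p
    unfolding D_def using calculation(1)[OF that]
    by (intro norm_diff_lt_in_grid_cube[OF l(1)]) (auto simp: grid_cube_def key_def)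
  ultimately show ?thesis using y(1) l(3) by (metis less_imp_le)
qed

theorem lemma6p2:
  fixes X :: "nat \<Rightarrow> ((real^'n) \<times> real) set"
    and H :: nat and s N :: real
  assumes H: "H \<ge> 1"
    and s: "0 < s" "s \<le> 1/4"
    and N: "N \<ge> (2 * sqrt (real (CARD('n) + 1)) / s) ^ 3 * real H powr (1 / real CARD('n))"
    and Xsub: "\<forall>m\<in>{1..H}. X m \<subseteq> UNIV \<times> {1/2 + s .. real H + 1/2 - s}"
    and disj: "\<forall>m\<in>{1..H}. \<forall>m'\<in>{1..H}. m \<noteq> m' \<longrightarrow> X m \<inter> X m' = {}"
    and sep: "s_separated s (\<Union>m\<in>{1..H}. X m)"
  shows "\<exists>\<Psi> :: (real^'n) \<times> real \<Rightarrow> (real^'n) \<times> real.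
           bilipschitz (2^8 * N^2 * (real H)^2) \<Psi>
         \<and> (\<forall>x t. t \<notin> {1/2 <..< real H + 1/2} \<longrightarrow> \<Psi> (x, t) = (x, t))
         \<and> (\<forall>m\<in>{1..H}. \<Psi> ` X m \<subseteq> (scaled_lattice N - int_lattice) \<times> {real m})
         \<and> (\<forall>p\<in>(\<Union>m\<in>{1..H}. X m). norm (fst (\<Psi> p) - fst p) \<le> s^2)"
proof -
  define P where "P = (\<Union>m\<in>{1..H}. X m)"
  have P: "P \<subseteq> UNIV \<times> {1/2 + s .. real H + 1/2 - s}" "s_separated s P"
    using Xsub sep unfolding P_def by blast+
  obtain y where y: "inj_on y P" "\<forall>p\<in>P. y p \<in> scaled_lattice N - int_lattice \<and> norm (y p - fst p) \<le> s^2"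
    using exists_lattice_assignment[OF H s N P] by blast
  have "8 / s \<le> N" using threshold_ge_8_div[OF _ H s N] by (simp add: Suc_leI)
  moreover have "0 < 8 / s" using s by simp
  ultimately have "s_separated (1 / N) (scaled_lattice N :: (real^'n) set)"
    by (intro s_separated_scaled_lattice) linarith
  then have "s_separated (1 / N) (y ` P)" using y(2) unfolding s_separated_def by blast
  define level where "level p = (THE m. m \<in> {1..H} \<and> p \<in> X m)" for p
  have level: "level p = m" if "m \<in> {1..H}" "p \<in> X m" for m p
    unfolding level_def using disj that by (intro the_equality) blast+
  then have "\<forall>p\<in>P. level p \<in> {1..H}" unfolding P_def by blast
  then obtain \<Psi> where "bilipschitz (2^8 * N^2 * (real H)^2) \<Psi>"
      "\<forall>x t. t \<notin> {1/2 <..< real H + 1/2} \<longrightarrow> \<Psi> (x, t) = (x, t)"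
      "\<forall>p\<in>P. \<Psi> p = (y p, real (level p))"
    using exists_bilipschitz_moving_points[OF H s \<open>8 / s \<le> N\<close> P y(1) \<open>s_separated (1 / N) (y ` P)\<close>] y(2)
    by blast
  then show ?thesis using y(2) level unfolding P_def by (intro exI[of _ \<Psi>]) fastforce
qed

end
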